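(* Let $d\ge2$, $p_c(\mathbb{Z}^d)<p\le 1$, and let $c_1,c_2,c_3,c_4,c_5>0$. There exists a constant $C=C(c_1,c_2,c_3,c_4,c_5,d,p)>0$ such that for every $n$, every $\omega\in H_n(c_1,c_2,c_3,c_4,c_5)$ and every edge $e\in\mathbb{E}_d(n)$, \[ |\phi(n)(\omega)-\phi(n)(\omega^e)|\le \frac{C}{n^d}. \]
   Context: Let $\mathbb{T}^d(n)=\mathbb{Z}^d/n\mathbb{Z}^d$ with edge set $\mathbb{E}_d(n)$, $\Omega=\{0,1\}^{\mathbb{E}_d(n)}$ with the Bernoulli($p$) product measure; $e$ is open in $\omega$ if $\omega(e)=1$. $C_d(n)(\omega)$ is the largest open connected component (ties broken by a fixed deterministic rule). For $e\in\mathbb{E}_d(n)$, $\omega^e$ agrees with $\omega$ off $e$ and $\omega^e(e)=1-\omega(e)$. For a nonempty vertex set $A\subset C_d(n)(\eta)$, $\psi_A(\eta)=|\partial A(\eta)|/|A|$ where $\partial A(\eta)$ is the set of edges open in $\eta$ with exactly one endpoint in $A$; the Cheeger constant is $\phi(n)(\eta)=\min\{\psi_A(\eta):\emptyset\ne A\subset C_d(n)(\eta),\ |A|\le|C_d(n)(\eta)|/2\}$; such $A$ are called admissible for $\eta$. Define the events $H^1_n(c_1)=\{|C_d(n)(\omega)|>c_1n^d\}$; $H^2_n(c_2,c_3)=\{c_2/n<\phi(n)(\omega)<c_3/n\}$; $H^3_n=\{\forall e\in\mathbb{E}_d(n):\ |C_d(n)(\omega)\triangle C_d(n)(\omega^e)|\le\sqrt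 n\}$; $H^4_n(c_4)=\{\exists A$ admissible for $\omega$ with $|A|>c_4n^d$ and $\psi_A(\omega)=\phi(n)(\omega)\}$; $H^5_n(c_5)=\{\forall e\in\mathbb{E}_d(n)\ \exists A$ admissible for $\omega^e$ with $|A|>c_5n^d$ and $\psi_A(\omega^e)=\phi(n)(\omega^e)\}$; and $H_n(c_1,\dots,c_5)=H^1_n(c_1)\cap H^2_n(c_2,c_3)\cap H^3_n\cap H^4_n(c_4)\cap H^5_n(c_5)$. *)

theory Defs
  imports "HOL-Probability.Probability"
begin

(* Vertices of Z^d and of the torus: integer vectors indexed by nat,
   with all coordinates >= d equal to 0. Edges are 2-element vertex sets. *)
type_synonym vtx = "nat \<Rightarrow> int"
type_synonym edge = "vtx set"
type_synonym config = "edge \<Rightarrow> bool"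

definition zd_V :: "nat \<Rightarrow> vtx set" where
  "zd_V d = {x. \<forall>i\<ge>d. x i = 0}"

definition zd_E :: "nat \<Rightarrow> edge set" where
  "zd_E d = {{x, y} | x y. x \<in> zd_V d \<and> y \<in> zd_V d \<and>
      (\<exists>i<d. y i = x i + 1 \<and> (\<forall>j. j \<noteq> i \<longrightarrow> y j = x j))}"

definition zd_open_adj :: "nat \<Rightarrow> config \<Rightarrow> vtx \<Rightarrow> vtx \<Rightarrow> bool" where
  "zd_open_adj d \<omega> x y \<longleftrightarrow> {x, y} \<in> zd_E d \<and> \<omega> {x, y}"

definition perc_measure :: "nat \<Rightarrow> real \<Rightarrow> config measure" where
  "perc_measure d p = PiM (zd_E d) (\<lambda>_. measure_pmf (bernoulli_pmf p))"

definition theta :: "nat \<Rightarrow> real \<Rightarrow> real" where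
  "theta d p = measure (perc_measure d p)
     {\<omega> \<in> space (perc_measure d p). infinite {y. (zd_open_adj d \<omega>)\<^sup>*\<^sup>* (\<lambda>_. 0) y}}"

definition p_c :: "nat \<Rightarrow> real" where
  "p_c d = Sup {p \<in> {0..1}. theta d p = 0}"

definition torus_V :: "nat \<Rightarrow> nat \<Rightarrow> vtx set" where
  "torus_V d n = {x. (\<forall>i<d. 0 \<le> x i \<and> x i < int n) \<and> (\<forall>i\<ge>d. x i = 0)}"

definition torus_E :: "nat \<Rightarrow> nat \<Rightarrow> edge set" where
  "torus_E d n = {{x, y} | x y. x \<in> torus_V d n \<and> y \<in> torus_V d n \<and> x \<noteq> y \<and>
      (\<exists>i<d. y i = (x i + 1) mod int n \<and> (\<forall>j. j \<noteq> i \<longrightarrow> y j = x j))}"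

definition open_adj :: "nat \<Rightarrow> nat \<Rightarrow> config \<Rightarrow> vtx \<Rightarrow> vtx \<Rightarrow> bool" where
  "open_adj d n \<omega> x y \<longleftrightarrow> {x, y} \<in> torus_E d n \<and> \<omega> {x, y}"

definition comp :: "nat \<Rightarrow> nat \<Rightarrow> config \<Rightarrow> vtx \<Rightarrow> vtx set" where
  "comp d n \<omega> x = {y. (open_adj d n \<omega>)\<^sup>*\<^sup>* x y}"

definition comps :: "nat \<Rightarrow> nat \<Rightarrow> config \<Rightarrow> vtx set set" where
  "comps d n \<omega> = comp d n \<omega> ` torus_V d n"

definition largest_comps :: "nat \<Rightarrow> nat \<Rightarrow> config \<Rightarrow> vtx set set" where
  "largest_comps d n \<omega> = {K \<in> comps d n \<omega>. \<forall>K' \<in> comps d n \<omega>. card K' \<le> card K}"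

definition Cl :: "(vtx set set \<Rightarrow> vtx set) \<Rightarrow> nat \<Rightarrow> nat \<Rightarrow> config \<Rightarrow> vtx set" where
  "Cl tie d n \<omega> = tie (largest_comps d n \<omega>)"

definition flip_edge :: "config \<Rightarrow> edge \<Rightarrow> config" where
  "flip_edge \<omega> e = fun_upd \<omega> e (\<not> \<omega> e)"

definition bdry :: "nat \<Rightarrow> nat \<Rightarrow> config \<Rightarrow> vtx set \<Rightarrow> edge set" where
  "bdry d n \<omega> A = {e \<in> torus_E d n. \<omega> e \<and> card (e \<inter> A) = 1}"

definition psi :: "nat \<Rightarrow> nat \<Rightarrow> config \<Rightarrow> vtx set \<Rightarrow> real" where
  "psi d n \<omega> A = real (card (bdry d n \<omega> A)) / real (card A)"

definition admissible :: "(vtx set set \<Rightarrow> vtx set) \<Rightarrow> nat \<Rightarrow> nat \<Rightarrow> config \<Rightarrow> vtx set \<Rightarrow> bool" where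
  "admissible tie d n \<omega> A \<longleftrightarrow> A \<noteq> {} \<and> A \<subseteq> Cl tie d n \<omega> \<and>
      real (card A) \<le> real (card (Cl tie d n \<omega>)) / 2"

definition cheeger :: "(vtx set set \<Rightarrow> vtx set) \<Rightarrow> nat \<Rightarrow> nat \<Rightarrow> config \<Rightarrow> real" where
  "cheeger tie d n \<omega> = Min (psi d n \<omega> ` {A. admissible tie d n \<omega> A})"

definition H1 where
  "H1 tie d n c1 \<omega> \<longleftrightarrow> real (card (Cl tie d n \<omega>)) > c1 * real n ^ d"

definition H2 where
  "H2 tie d n c2 c3 \<omega> \<longleftrightarrow> c2 / real n < cheeger tie d n \<omega> \<and> cheeger tie d n \<omega> < c3 / real n"

definition H3 where
  "H3 tie d n \<omega> \<longleftrightarrow> (\<forall>e \<in> torus_E d n.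
      real (card (Cl tie d n \<omega> - Cl tie d n (flip_edge \<omega> e) \<union> (Cl tie d n (flip_edge \<omega> e) - Cl tie d n \<omega>)))
        \<le> sqrt (real n))"

definition H4 where
  "H4 tie d n c4 \<omega> \<longleftrightarrow> (\<exists>A. admissible tie d n \<omega> A \<and> real (card A) > c4 * real n ^ d \<and>
      psi d n \<omega> A = cheeger tie d n \<omega>)"

definition H5 where
  "H5 tie d n c5 \<omega> \<longleftrightarrow> (\<forall>e \<in> torus_E d n. \<exists>A. admissible tie d n (flip_edge \<omega> e) A \<and>
      real (card A) > c5 * real n ^ d \<and> psi d n (flip_edge \<omega> e) A = cheeger tie d n (flip_edge \<omega> e))"

definition H where
  "H tie d n c1 c2 c3 c4 c5 \<omega> \<longleftrightarrow> H1 tie d n c1 \<omega> \<and> H2 tie d n c2 c3 \<omega> \<and> H3 tie d n \<omega> \<and>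
      H4 tie d n c4 \<omega> \<and> H5 tie d n c5 \<omega>"

end

theory Submission
  imports Defs
begin

(* Let omega' be omega with the edge e flipped, K and K' the largest
   clusters of omega and omega', and s = |K \<triangle> K'|.  From a Cheeger-optimal set A of
   omega we build an admissible set B of omega': take A \<inter> K', or its complement in
   K' if that is too large.  Since K' is closed under open edges of omega', and
   omega' differs from omega only at e, the boundary of B has at most one more edge
   than that of A, while |B| \<ge> |A| - s.  Hence
     phi(omega') \<le> (|\<partial>A| + 1) / (|A| - s) \<le> phi(omega) + 2(1 + phi(omega) s) / |A|.
   On H_n we have s \<le> sqrt n, |A| > c4 n^d and phi(omega) < c3/n, which gives
   phi(omega') \<le> phi(omega) + O(n^-d); H5 gives the reverse inequality the same way.
   This needs 2s \<le> |A|, which holds once c4 n > 2 and c5 n > 2 (using d \<ge> 2);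
   for the finitely many smaller n both Cheeger constants are bounded by the
   number of torus edges, which is absorbed into the constant. *)

lemma finite_torus_V: "finite (torus_V d n)"
proof -
  have inj: "inj_on (\<lambda>x. restrict x {..<d}) (torus_V d n)"
  proof (intro inj_onI ext)
    fix x y i assume x: "x \<in> torus_V d n" and y: "y \<in> torus_V d n"
      and eq: "restrict x {..<d} = restrict y {..<d}"
    show "x i = y i"
    proof (cases "i < d")
      case True
      then show ?thesis using fun_cong[OF eq, of i] by simp
    next
      case False
      then show ?thesis using x y by (simp add: torus_V_def)
    qed
  qed
  have "(\<lambda>x. restrict x {..<d}) ` torus_V d n \<subseteq> PiE {..<d} (\<lambda>_. {0..<int n})"
    by (auto simp: torus_V_def image_subset_iff restrict_PiE_iff)
  moreover have "finite (PiE {..<d} (\<lambda>_. {0..<int n}))"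
    by (intro finite_PiE) auto
  ultimately show ?thesis
    using finite_subset finite_imageD inj by blast
qed

lemma finite_torus_E: "finite (torus_E d n)"
proof -
  have "torus_E d n \<subseteq> (\<lambda>(x, y). {x, y}) ` (torus_V d n \<times> torus_V d n)"
    by (auto simp: torus_E_def)
  then show ?thesis using finite_torus_V finite_subset by blast
qed

lemma torus_E_pair: "f \<in> torus_E d n \<Longrightarrow> \<exists>u v. f = {u, v} \<and> u \<noteq> v"
  by (auto simp: torus_E_def)

definition tie_breaking :: "(vtx set set \<Rightarrow> vtx set) \<Rightarrow> bool" where
  "tie_breaking tie \<longleftrightarrow> (\<forall>S. S \<noteq> {} \<longrightarrow> tie S \<in> S)"

definition open_closed :: "nat \<Rightarrow> nat \<Rightarrow> config \<Rightarrow> vtx set \<Rightarrow> bool" where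
  "open_closed d n \<omega> K \<longleftrightarrow> (\<forall>u v. u \<in> K \<longrightarrow> open_adj d n \<omega> u v \<longrightarrow> v \<in> K)"

lemma open_adj_sym: "open_adj d n \<omega> x y \<Longrightarrow> open_adj d n \<omega> y x"
  by (simp add: open_adj_def insert_commute)

lemma open_adj_torus_V: "open_adj d n \<omega> x y \<Longrightarrow> y \<in> torus_V d n"
  by (auto simp: open_adj_def torus_E_def doubleton_eq_iff)

lemma comp_subset_torus_V: "x \<in> torus_V d n \<Longrightarrow> comp d n \<omega> x \<subseteq> torus_V d n"
proof
  fix y assume x: "x \<in> torus_V d n" and "y \<in> comp d n \<omega> x"
  then have "(open_adj d n \<omega>)\<^sup>*\<^sup>* x y" by (simp add: comp_def)
  then show "y \<in> torus_V d n"
    by (induction rule: rtranclp_induct) (use x open_adj_torus_V in auto)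
qed

lemma comp_open_closed: "open_closed d n \<omega> (comp d n \<omega> x)"
  by (auto simp: open_closed_def comp_def intro: rtranclp.rtrancl_into_rtrancl)

lemma Cl_is_comp:
  assumes tie: "tie_breaking tie" and n: "n \<ge> 1"
  shows "\<exists>x\<in>torus_V d n. Cl tie d n \<omega> = comp d n \<omega> x"
proof -
  have fin: "finite (comps d n \<omega>)" by (simp add: comps_def finite_torus_V)
  have "(\<lambda>_. 0) \<in> torus_V d n" using n by (simp add: torus_V_def)
  then have ne: "comps d n \<omega> \<noteq> {}" by (auto simp: comps_def)
  have "Max (card ` comps d n \<omega>) \<in> card ` comps d n \<omega>"
    using fin ne by (intro Max_in) auto
  then obtain K where K: "K \<in> comps d n \<omega>" "card K = Max (card ` comps d n \<omega>)"
    by auto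
  have "K \<in> largest_comps d n \<omega>"
    using K fin by (auto simp: largest_comps_def)
  then have "Cl tie d n \<omega> \<in> largest_comps d n \<omega>"
    using tie unfolding Cl_def tie_breaking_def by blast
  then show ?thesis by (auto simp: largest_comps_def comps_def)
qed

lemma Cl_finite: "tie_breaking tie \<Longrightarrow> n \<ge> 1 \<Longrightarrow> finite (Cl tie d n \<omega>)"
  using Cl_is_comp comp_subset_torus_V finite_torus_V finite_subset by metis

lemma Cl_open_closed: "tie_breaking tie \<Longrightarrow> n \<ge> 1 \<Longrightarrow> open_closed d n \<omega> (Cl tie d n \<omega>)"
  using Cl_is_comp comp_open_closed by metis

section \<open>Transferring a set across a single edge flip\<close>

lemma flip_edge_other: "f \<noteq> e \<Longrightarrow> flip_edge \<omega> e f = \<omega> f"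
  by (simp add: flip_edge_def)

lemma flip_edge_flip_edge: "flip_edge (flip_edge \<omega> e) e = \<omega>"
  by (auto simp: flip_edge_def)

lemma open_edge_not_across:
  assumes closed: "open_closed d n \<omega> K" and f: "f \<in> torus_E d n" "\<omega> f"
  obtains u v where "f = {u, v}" "u \<noteq> v" "u \<in> K \<longleftrightarrow> v \<in> K"
proof -
  obtain u v where uv: "f = {u, v}" "u \<noteq> v" using torus_E_pair f(1) by blast
  then have "open_adj d n \<omega> u v" using f by (simp add: open_adj_def)
  then have "u \<in> K \<longleftrightarrow> v \<in> K" using closed open_adj_sym unfolding open_closed_def by blast
  with uv that show ?thesis by blast
qed

lemma card_pair_Int_eq_1: "u \<noteq> v \<Longrightarrow> card ({u, v} \<inter> X) = 1 \<longleftrightarrow> (u \<in> X) \<noteq> (v \<in> X)"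
  by (cases "u \<in> X"; cases "v \<in> X") auto

lemma bdry_Int_closed:
  assumes closed: "open_closed d n (flip_edge \<omega> e) K'"
  shows "bdry d n (flip_edge \<omega> e) (A \<inter> K') \<subseteq> insert e (bdry d n \<omega> A)"
proof
  fix f assume f: "f \<in> bdry d n (flip_edge \<omega> e) (A \<inter> K')"
  show "f \<in> insert e (bdry d n \<omega> A)"
  proof (cases "f = e")
    case False
    have fE: "f \<in> torus_E d n" "flip_edge \<omega> e f" "card (f \<inter> (A \<inter> K')) = 1"
      using f by (auto simp: bdry_def)
    then obtain u v where uv: "f = {u, v}" "u \<noteq> v" "u \<in> K' \<longleftrightarrow> v \<in> K'"
      using open_edge_not_across[OF closed] by metis
    then have "card (f \<inter> A) = 1"
      using fE(3) card_pair_Int_eq_1[of u v] by auto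
    then show ?thesis using fE flip_edge_other[OF False] by (simp add: bdry_def)
  qed simp
qed

lemma bdry_Diff_closed:
  assumes closed: "open_closed d n \<omega> K" and "B \<subseteq> K"
  shows "bdry d n \<omega> (K - B) = bdry d n \<omega> B"
proof -
  have "card (f \<inter> (K - B)) = 1 \<longleftrightarrow> card (f \<inter> B) = 1"
    if f: "f \<in> torus_E d n" "\<omega> f" for f
  proof -
    obtain u v where uv: "f = {u, v}" "u \<noteq> v" "u \<in> K \<longleftrightarrow> v \<in> K"
      using open_edge_not_across[OF closed f] by metis
    then show ?thesis using \<open>B \<subseteq> K\<close> card_pair_Int_eq_1[of u v] by auto
  qed
  then show ?thesis unfolding bdry_def by blast
qed

lemma transfer_set:
  fixes K K' A :: "vtx set" and s :: nat
  assumes finK: "finite K" and finK': "finite K'"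
    and closed: "open_closed d n (flip_edge \<omega> e) K'"
    and AK: "A \<subseteq> K" and A2: "2 * card A \<le> card K"
    and sd: "card ((K - K') \<union> (K' - K)) \<le> s" and sA: "s < card A"
  obtains B where "B \<noteq> {}" "B \<subseteq> K'" "2 * card B \<le> card K'"
    "card (bdry d n (flip_edge \<omega> e) B) \<le> card (bdry d n \<omega> A) + 1" "card A \<le> card B + s"
proof -
  define B0 where "B0 = A \<inter> K'"
  have finA: "finite A" using AK finK finite_subset by blast
  have B0K': "B0 \<subseteq> K'" by (simp add: B0_def)
  have fin_bdry: "finite (bdry d n \<omega> A)" using finite_torus_E by (simp add: bdry_def)
  have "bdry d n (flip_edge \<omega> e) B0 \<subseteq> insert e (bdry d n \<omega> A)"
    unfolding B0_def by (rule bdry_Int_closed[OF closed])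
  then have "card (bdry d n (flip_edge \<omega> e) B0) \<le> card (insert e (bdry d n \<omega> A))"
    using fin_bdry by (intro card_mono) auto
  then have bdry_B0: "card (bdry d n (flip_edge \<omega> e) B0) \<le> card (bdry d n \<omega> A) + 1"
    using fin_bdry by (simp add: card_insert_if split: if_splits)
  have "A - K' \<subseteq> (K - K') \<union> (K' - K)" using AK by blast
  then have lost: "card (A - K') \<le> s"
    using card_mono[of "(K - K') \<union> (K' - K)" "A - K'"] finK finK' sd by simp
  have cardA: "card A = card B0 + card (A - K')"
    unfolding B0_def using finA by (rule card_Int_Diff)
  have "card K \<le> card (K' \<union> ((K - K') \<union> (K' - K)))"
    using finK finK' by (intro card_mono) auto
  also have "\<dots> \<le> card K' + card ((K - K') \<union> (K' - K))" by (rule card_Un_le)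
  finally have cardK: "card K \<le> card K' + s" using sd by linarith
  show ?thesis
  proof (cases "2 * card B0 \<le> card K'")
    case True
    have cA: "card A \<le> card B0 + s" using cardA lost by linarith
    then have "card B0 > 0" using sA by linarith
    then have "B0 \<noteq> {}" by (simp add: card_gt_0_iff)
    then show ?thesis using that True bdry_B0 B0K' cA by blast
  next
    case False
    have "card (K' - B0) = card K' - card B0"
      using card_Diff_subset[OF finite_subset[OF B0K' finK'] B0K'] .
    moreover have "card B0 \<le> card K'" using card_mono[OF finK' B0K'] .
    ultimately have cA: "card A \<le> card (K' - B0) + s" and half: "2 * card (K' - B0) \<le> card K'"
      using False cardA cardK A2 by linarith+
    then have "card (K' - B0) > 0" using sA by linarith
    then have "K' - B0 \<noteq> {}" by (simp add: card_gt_0_iff)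
    moreover have "bdry d n (flip_edge \<omega> e) (K' - B0) = bdry d n (flip_edge \<omega> e) B0"
      using closed B0K' by (rule bdry_Diff_closed)
    ultimately show ?thesis using that[of "K' - B0"] bdry_B0 cA half by auto
  qed
qed

text \<open>There are finitely many admissible sets, so the Cheeger constant is a minimum
  actually attained.\<close>

lemma finite_admissible: "finite (Cl tie d n \<omega>) \<Longrightarrow> finite {A. admissible tie d n \<omega> A}"
  by (rule finite_subset[of _ "Pow (Cl tie d n \<omega>)"]) (auto simp: admissible_def)

lemma cheeger_le_psi:
  assumes "finite (Cl tie d n \<omega>)" and "admissible tie d n \<omega> B"
  shows "cheeger tie d n \<omega> \<le> psi d n \<omega> B"
  unfolding cheeger_def using finite_admissible[OF assms(1)] assms(2) by (intro Min_le) auto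

lemma cheeger_nonneg:
  assumes "finite (Cl tie d n \<omega>)" and "admissible tie d n \<omega> B"
  shows "0 \<le> cheeger tie d n \<omega>"
proof -
  have "cheeger tie d n \<omega> \<in> psi d n \<omega> ` {A. admissible tie d n \<omega> A}"
    unfolding cheeger_def using finite_admissible[OF assms(1)] assms(2) by (intro Min_in) auto
  then show ?thesis by (auto simp: psi_def)
qed

text \<open>A crude bound, used only for the finitely many small tori.\<close>

lemma psi_le_card_torus_E:
  assumes "admissible tie d n \<omega> A" and "finite (Cl tie d n \<omega>)"
  shows "psi d n \<omega> A \<le> real (card (torus_E d n))"
proof -
  have "finite A" using assms finite_subset unfolding admissible_def by blast
  then have cA: "card A \<ge> 1" using assms(1) by (simp add: admissible_def Suc_le_eq card_gt_0_iff)
  have "card (bdry d n \<omega> A) \<le> card (torus_E d n)"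
    using finite_torus_E by (intro card_mono) (auto simp: bdry_def)
  then have "real (card (bdry d n \<omega> A)) / real (card A) \<le> real (card (torus_E d n)) / 1"
    using cA by (intro frac_le) auto
  then show ?thesis by (simp add: psi_def)
qed

lemma cheeger_bounds:
  assumes tie: "tie_breaking tie" and n: "n \<ge> 1"
    and adm: "admissible tie d n \<omega> A"
  shows "0 \<le> cheeger tie d n \<omega>" and "cheeger tie d n \<omega> \<le> real (card (torus_E d n))"
  using cheeger_nonneg[OF Cl_finite[OF tie n] adm] cheeger_le_psi[OF Cl_finite[OF tie n] adm]
    psi_le_card_torus_E[OF adm Cl_finite[OF tie n]] by auto

section \<open>The one-sided perturbation estimate\<close>

definition cluster_change :: "(vtx set set \<Rightarrow> vtx set) \<Rightarrow> nat \<Rightarrow> nat \<Rightarrow> config \<Rightarrow> config \<Rightarrow> nat" where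
  "cluster_change tie d n \<omega> \<omega>' =
     card ((Cl tie d n \<omega> - Cl tie d n \<omega>') \<union> (Cl tie d n \<omega>' - Cl tie d n \<omega>))"

lemma cluster_change_sym: "cluster_change tie d n \<omega> \<omega>' = cluster_change tie d n \<omega>' \<omega>"
  unfolding cluster_change_def by (simp add: Un_commute)

lemma cheeger_transfer:
  assumes tie: "tie_breaking tie" and n: "n \<ge> 1"
    and adm: "admissible tie d n \<omega> A"
    and sA: "cluster_change tie d n \<omega> (flip_edge \<omega> e) < card A"
  shows "cheeger tie d n (flip_edge \<omega> e) \<le>
    (real (card (bdry d n \<omega> A)) + 1) / (real (card A) - real (cluster_change tie d n \<omega> (flip_edge \<omega> e)))"
proof -
  let ?\<omega>' = "flip_edge \<omega> e" and ?s = "cluster_change tie d n \<omega> (flip_edge \<omega> e)"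
  have AK: "A \<subseteq> Cl tie d n \<omega>" and A2: "2 * card A \<le> card (Cl tie d n \<omega>)"
    using adm by (auto simp: admissible_def)
  have sd: "card ((Cl tie d n \<omega> - Cl tie d n ?\<omega>') \<union> (Cl tie d n ?\<omega>' - Cl tie d n \<omega>)) \<le> ?s"
    by (simp add: cluster_change_def)
  obtain B where B: "B \<noteq> {}" "B \<subseteq> Cl tie d n ?\<omega>'" "2 * card B \<le> card (Cl tie d n ?\<omega>')"
      "card (bdry d n ?\<omega>' B) \<le> card (bdry d n \<omega> A) + 1" "card A \<le> card B + ?s"
    by (rule transfer_set[OF Cl_finite[OF tie n] Cl_finite[OF tie n] Cl_open_closed[OF tie n] AK A2 sd sA])
  have admB: "admissible tie d n ?\<omega>' B" using B(1-3) by (simp add: admissible_def)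
  have "cheeger tie d n ?\<omega>' \<le> real (card (bdry d n ?\<omega>' B)) / real (card B)"
    using cheeger_le_psi[OF Cl_finite[OF tie n] admB] by (simp add: psi_def)
  also have "\<dots> \<le> (real (card (bdry d n \<omega> A)) + 1) / (real (card A) - real ?s)"
    using B(4,5) sA by (intro frac_le) auto
  finally show ?thesis .
qed

text \<open>The elementary inequality turning the previous bound into an additive error.\<close>

lemma ratio_perturbation:
  fixes x phi a s M L :: real
  assumes x: "x \<le> (phi * a + 1) / (a - s)" and aM: "a > M" and M: "M > 0" and s: "0 \<le> s"
    and s2: "2 * s \<le> a" and phi: "0 \<le> phi" and L: "phi * s \<le> L"
  shows "x \<le> phi + 2 * (1 + L) / M"
proof -
  have as: "a - s \<ge> a / 2" and as0: "a - s > 0" using s2 aM M by auto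
  have L0: "0 \<le> 1 + L" using L mult_nonneg_nonneg[OF phi s] by linarith
  have "(phi * a + 1) / (a - s) = phi + (phi * s + 1) / (a - s)"
    using as0 by (simp add: field_simps)
  also have "\<dots> \<le> phi + (1 + L) / (a - s)"
    using as0 L by (intro add_left_mono divide_right_mono) auto
  also have "\<dots> \<le> phi + (1 + L) / (a / 2)"
    using as aM M L0 by (intro add_left_mono divide_left_mono) auto
  also have "\<dots> = phi + 2 * (1 + L) / a" by simp
  also have "\<dots> \<le> phi + 2 * (1 + L) / M"
    using aM M L0 by (intro add_left_mono divide_left_mono) auto
  finally show ?thesis using x by simp
qed

lemma cheeger_one_sided:
  assumes tie: "tie_breaking tie" and n: "n \<ge> 1"
    and adm: "admissible tie d n \<omega> A" and opt: "psi d n \<omega> A = cheeger tie d n \<omega>"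
    and AM: "real (card A) > M" and M: "M > 0"
    and s2: "2 * real (cluster_change tie d n \<omega> (flip_edge \<omega> e)) \<le> real (card A)"
    and L: "cheeger tie d n \<omega> * real (cluster_change tie d n \<omega> (flip_edge \<omega> e)) \<le> L"
  shows "cheeger tie d n (flip_edge \<omega> e) \<le> cheeger tie d n \<omega> + 2 * (1 + L) / M"
proof (rule ratio_perturbation[OF _ AM M _ s2 _ L])
  have "card A > 0" using AM M by linarith
  then have sA: "cluster_change tie d n \<omega> (flip_edge \<omega> e) < card A" using s2 by linarith
  have "real (card (bdry d n \<omega> A)) = cheeger tie d n \<omega> * real (card A)"
    using opt \<open>card A > 0\<close> by (simp add: psi_def field_simps)
  then show "cheeger tie d n (flip_edge \<omega> e) \<le> (cheeger tie d n \<omega> * real (card A) + 1) /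
      (real (card A) - real (cluster_change tie d n \<omega> (flip_edge \<omega> e)))"
    using cheeger_transfer[OF tie n adm sA] by simp
  show "0 \<le> cheeger tie d n \<omega>" by (rule cheeger_nonneg[OF Cl_finite[OF tie n] adm])
qed simp

section \<open>The two regimes of n\<close>

lemma sqrt_le_self: "1 \<le> x \<Longrightarrow> sqrt x \<le> x"
  by (rule real_le_lsqrt) (use mult_right_mono[of 1 x x] in \<open>auto simp: power2_eq_square\<close>)

lemma volume_dominates_linear:
  fixes n :: nat and a c s :: real
  assumes n: "n \<ge> 1" and d: "d \<ge> 2" and cn: "c * real n > 2"
    and s: "s \<le> real n" and a: "a > c * real n ^ d"
  shows "2 * s \<le> a"
proof -
  have c: "c > 0" using zero_less_mult_pos2[of c "real n"] cn n by simp
  have "2 * s \<le> 2 * real n" using s by simp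
  also have "\<dots> \<le> c * real n * real n" using cn by (intro mult_right_mono) auto
  also have "\<dots> = c * real n ^ 2" by (simp add: power2_eq_square)
  also have "\<dots> \<le> c * real n ^ d" using c n d by (intro mult_left_mono power_increasing) auto
  finally show ?thesis using a by linarith
qed

lemma cheeger_flip_increase:
  assumes tie: "tie_breaking tie" and n: "n \<ge> 1" and d: "d \<ge> 2" and cn: "c * real n > 2"
    and adm: "admissible tie d n \<omega> A" and opt: "psi d n \<omega> A = cheeger tie d n \<omega>"
    and big: "real (card A) > c * real n ^ d"
    and s_n: "real (cluster_change tie d n \<omega> (flip_edge \<omega> e)) \<le> real n"
    and L: "cheeger tie d n \<omega> * real (cluster_change tie d n \<omega> (flip_edge \<omega> e)) \<le> L"
  shows "cheeger tie d n (flip_edge \<omega> e) \<le> cheeger tie d n \<omega> + 2 * (1 + L) / (c * real n ^ d)"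
proof (rule cheeger_one_sided[OF tie n adm opt big _ volume_dominates_linear[OF n d cn s_n big] L])
  have "c > 0" using zero_less_mult_pos2[of c "real n"] cn n by simp
  then show "c * real n ^ d > 0" using n by simp
qed

text \<open>H4 bounds the increase,
  and H5, applied to the flipped configuration, bounds the decrease.\<close>

lemma cheeger_flip_large_n:
  fixes c1 c2 c3 c4 c5 :: real
  assumes tie: "tie_breaking tie" and n: "n \<ge> 1" and d: "d \<ge> 2"
    and c3: "c3 > 0" and c4n: "c4 * real n > 2" and c5n: "c5 * real n > 2"
    and Hw: "H tie d n c1 c2 c3 c4 c5 \<omega>" and e: "e \<in> torus_E d n"
    and D1: "D1 = 2 * (1 + c3) / c4" and D2: "D2 = 2 * (1 + (c3 + D1)) / c5"
  shows "\<bar>cheeger tie d n \<omega> - cheeger tie d n (flip_edge \<omega> e)\<bar> \<le> (D1 + D2) / real n ^ d"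
proof -
  define \<omega>' where "\<omega>' = flip_edge \<omega> e"
  define \<phi> where "\<phi> = cheeger tie d n \<omega>"
  define \<phi>' where "\<phi>' = cheeger tie d n \<omega>'"
  define s where "s = real (cluster_change tie d n \<omega> \<omega>')"
  have flip_back: "flip_edge \<omega>' e = \<omega>" by (simp add: \<omega>'_def flip_edge_flip_edge)
  have s_back: "s = real (cluster_change tie d n \<omega>' (flip_edge \<omega>' e))"
    by (simp add: s_def flip_back cluster_change_sym)
  have H2: "\<phi> < c3 / real n"
    using Hw by (simp add: H_def H2_def \<phi>_def)
  have s_sqrt: "s \<le> sqrt (real n)"
    using Hw e by (simp add: H_def H3_def s_def cluster_change_def \<omega>'_def)
  obtain A where A: "admissible tie d n \<omega> A" "real (card A) > c4 * real n ^ d" "psi d n \<omega> A = \<phi>"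
    using Hw by (auto simp: H_def H4_def \<phi>_def)
  obtain A' where A': "admissible tie d n \<omega>' A'" "real (card A') > c5 * real n ^ d"
      "psi d n \<omega>' A' = \<phi>'"
    using Hw e by (auto simp: H_def H5_def \<phi>'_def \<omega>'_def)
  have c4: "c4 > 0" and c5: "c5 > 0"
    using zero_less_mult_pos2[of c4 "real n"] zero_less_mult_pos2[of c5 "real n"] c4n c5n n by auto
  have nd_pos: "real n ^ d > 0" using n by simp
  have s_n: "s \<le> real n" using s_sqrt sqrt_le_self[of "real n"] n by simp
  have "real n \<le> real n ^ d" using power_increasing[of 1 d "real n"] n d by simp
  then have s_le: "s \<le> real n ^ d" using s_n by linarith
  have \<phi>0: "0 \<le> \<phi>"
    unfolding \<phi>_def by (rule cheeger_bounds(1)[OF tie n A(1)])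
  have "\<phi> * s \<le> (c3 / real n) * real n"
    using H2 \<phi>0 s_n by (intro mult_mono) (auto simp: s_def)
  then have \<phi>s: "\<phi> * s \<le> c3" using n by simp
  have "\<phi>' \<le> \<phi> + 2 * (1 + c3) / (c4 * real n ^ d)"
    using cheeger_flip_increase[OF tie n d c4n A(1) _ A(2)] A(3) s_n \<phi>s
    by (simp add: \<phi>_def \<phi>'_def \<omega>'_def s_def)
  then have dir1: "\<phi>' \<le> \<phi> + D1 / real n ^ d" by (simp add: D1 mult.commute)
  have "\<phi>' * s \<le> (\<phi> + D1 / real n ^ d) * s"
    using dir1 by (intro mult_right_mono) (auto simp: s_def)
  also have "\<dots> = \<phi> * s + D1 * (s / real n ^ d)" by (simp add: algebra_simps)
  also have "\<dots> \<le> c3 + D1 * 1"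
    using \<phi>s s_le nd_pos c3 c4 by (intro add_mono mult_left_mono) (auto simp: D1)
  finally have \<phi>'s: "\<phi>' * s \<le> c3 + D1" by simp
  have "\<phi> \<le> \<phi>' + 2 * (1 + (c3 + D1)) / (c5 * real n ^ d)"
    using cheeger_flip_increase[where e=e and L="c3 + D1", OF tie n d c5n A'(1) _ A'(2)] A'(3) s_n \<phi>'s
    by (simp add: \<phi>_def \<phi>'_def flip_back s_back)
  then have dir2: "\<phi> \<le> \<phi>' + D2 / real n ^ d" by (simp add: D2 mult.commute)
  have "D1 > 0" using c3 c4 by (simp add: D1)
  then have "D2 > 0" using c3 c5 unfolding D2 by (intro divide_pos_pos) auto
  have "\<bar>\<phi> - \<phi>'\<bar> \<le> D1 / real n ^ d + D2 / real n ^ d"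
    using dir1 dir2 divide_pos_pos[OF \<open>D1 > 0\<close> nd_pos] divide_pos_pos[OF \<open>D2 > 0\<close> nd_pos]
    by (simp add: abs_le_iff)
  then show ?thesis by (simp add: \<phi>_def \<phi>'_def \<omega>'_def add_divide_distrib)
qed

lemma cheeger_flip_crude:
  assumes tie: "tie_breaking tie" and n: "n \<ge> 1"
    and Hw: "H tie d n c1 c2 c3 c4 c5 \<omega>" and e: "e \<in> torus_E d n"
  shows "\<bar>cheeger tie d n \<omega> - cheeger tie d n (flip_edge \<omega> e)\<bar> \<le> real (card (torus_E d n))"
proof -
  obtain A where A: "admissible tie d n \<omega> A"
    using Hw by (auto simp: H_def H4_def)
  obtain A' where A': "admissible tie d n (flip_edge \<omega> e) A'"
    using Hw e by (auto simp: H_def H5_def)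
  show ?thesis
    using cheeger_bounds[OF tie n A] cheeger_bounds[OF tie n A'] by (auto simp: abs_le_iff)
qed

lemma bounded_up_to_N:
  fixes f :: "nat \<Rightarrow> nat" and x :: real
  assumes n: "n \<ge> 1" and nN: "n \<le> N" and x: "x \<le> real (f n)"
  shows "x \<le> real (Max (f ` {..N})) * real N ^ d / real n ^ d"
proof -
  have "f n \<le> Max (f ` {..N})" using nN by (intro Max_ge) auto
  then have "x \<le> real (Max (f ` {..N}))" using x by linarith
  also have "\<dots> \<le> real (Max (f ` {..N})) * (real N ^ d / real n ^ d)"
    using n nN by (intro mult_le_cancel_left1[THEN iffD2]) (auto simp: power_mono)
  finally show ?thesis by simp
qed

lemma beyond_threshold:
  fixes a b x :: real
  assumes a: "a > 0" and b: "b > 0" and x: "x > 2 / a + 2 / b"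
  shows "a * x > 2" and "b * x > 2"
proof -
  have "2 / a < x" and "2 / b < x"
    using x divide_pos_pos[of 2 a, OF _ a] divide_pos_pos[of 2 b, OF _ b] by linarith+
  then show "a * x > 2" and "b * x > 2"
    using a b by (simp_all add: divide_less_eq mult.commute)
qed

theorem claim2p3:
  fixes d :: nat and p c1 c2 c3 c4 c5 :: real
    and tie :: "vtx set set \<Rightarrow> vtx set"
  assumes "d \<ge> 2" and "p_c d < p" and "p \<le> 1"
    and "c1 > 0" and "c2 > 0" and "c3 > 0" and "c4 > 0" and "c5 > 0"
    and "\<And>S. S \<noteq> {} \<Longrightarrow> tie S \<in> S"
  shows "\<exists>C > 0. \<forall>n \<ge> 1. \<forall>\<omega>. H tie d n c1 c2 c3 c4 c5 \<omega> \<longrightarrow>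
           (\<forall>e \<in> torus_E d n.
              \<bar>cheeger tie d n \<omega> - cheeger tie d n (flip_edge \<omega> e)\<bar> \<le> C / real n ^ d)"
proof -
  note d = assms(1) and c3 = assms(6) and c4 = assms(7) and c5 = assms(8)
  have tie: "tie_breaking tie" using assms(9) by (simp add: tie_breaking_def)
  define N where "N = nat \<lceil>2 / c4 + 2 / c5\<rceil>"
  define D1 where "D1 = 2 * (1 + c3) / c4"
  define D2 where "D2 = 2 * (1 + (c3 + D1)) / c5"
  define S where "S = real (Max ((\<lambda>m. card (torus_E d m)) ` {..N})) * real N ^ d"
  have D1: "D1 > 0" using c3 c4 by (simp add: D1_def)
  have D2: "D2 > 0" using D1 c3 c5 unfolding D2_def by (intro divide_pos_pos) auto
  have S: "S \<ge> 0" by (simp add: S_def)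
  have "\<bar>cheeger tie d n \<omega> - cheeger tie d n (flip_edge \<omega> e)\<bar> \<le> (D1 + D2 + S) / real n ^ d"
    if n: "n \<ge> 1" and Hw: "H tie d n c1 c2 c3 c4 c5 \<omega>" and e: "e \<in> torus_E d n" for n \<omega> e
  proof (cases "n \<le> N")
    case True
    have "\<bar>cheeger tie d n \<omega> - cheeger tie d n (flip_edge \<omega> e)\<bar> \<le> S / real n ^ d"
      using bounded_up_to_N[where f="\<lambda>m. card (torus_E d m)", OF n True
          cheeger_flip_crude[OF tie n Hw e]]
      by (simp add: S_def)
    also have "\<dots> \<le> (D1 + D2 + S) / real n ^ d"
      using D1 D2 by (intro divide_right_mono) auto
    finally show ?thesis .
  next
    case False
    then have "real n > 2 / c4 + 2 / c5" unfolding N_def by linarith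
    then have "c4 * real n > 2" and "c5 * real n > 2"
      using beyond_threshold[OF c4 c5] by auto
    then have "\<bar>cheeger tie d n \<omega> - cheeger tie d n (flip_edge \<omega> e)\<bar> \<le> (D1 + D2) / real n ^ d"
      by (rule cheeger_flip_large_n[OF tie n d c3 _ _ Hw e D1_def D2_def])
    also have "\<dots> \<le> (D1 + D2 + S) / real n ^ d"
      using S by (intro divide_right_mono) auto
    finally show ?thesis .
  qed
  then show ?thesis using D1 D2 S by (intro exI[of _ "D1 + D2 + S"]) auto
qed

end
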